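(* Let $T$ be a tournament, let $P=x_0x_1\ldots x_r$ be a path of length $r$ in $T$, and let $z\in V(T)\setminus V(P)$ be a vertex such that every vertex of $\{x_{\alpha+1},x_{\alpha+2},\ldots,x_r\}$ dominates $z$ and $z$ dominates every vertex of $\{x_0,x_1,\ldots,x_\alpha\}$, where $\alpha\in[2,r-3]$. Assume that $T$ contains no $(x_0,x_r)$-path of length $r+1$ whose vertex set is $\{z\}\cup V(P)$. Suppose that $x_sx_t$ is an arc of $T$ with $s\in[1,\alpha-1]$ and $t\in[\alpha+3,r]$. Then: if $s\geq 3$, no vertex of $\{x_0,x_1,\ldots,x_{s-2}\}$ dominates a vertex of $\{x_{\alpha+2},x_{\alpha+3},\ldots,x_{t-1}\}$; and if $t-s\neq 5$, then $x_{s-1}$ dominates no vertex of $\{x_{\alpha+2},x_{\alpha+3},\ldots,x_{t-1}\}$.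
   Context: Paths are directed and simple; the length of a path is its number of arcs. A vertex $u$ dominates $v$ if $uv$ is an arc. $[a,b]$ denotes the integers from $a$ to $b$. *)

theory Defs
  imports Main
begin

text \<open>A tournament on a finite vertex set V with arc relation A (A u v means u dominates v).\<close>
definition tournament :: "'a set \<Rightarrow> ('a \<Rightarrow> 'a \<Rightarrow> bool) \<Rightarrow> bool" where
  "tournament V A \<longleftrightarrow> finite V
     \<and> (\<forall>u v. A u v \<longrightarrow> u \<in> V \<and> v \<in> V)
     \<and> (\<forall>v. \<not> A v v)
     \<and> (\<forall>u\<in>V. \<forall>v\<in>V. u \<noteq> v \<longrightarrow> (A u v \<longleftrightarrow> \<not> A v u))"

text \<open>A directed simple path given as a list of vertices; its length is (length ps - 1) arcs.\<close>
definition is_path :: "'a set \<Rightarrow> ('a \<Rightarrow> 'a \<Rightarrow> bool) \<Rightarrow> 'a list \<Rightarrow> bool" where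
  "is_path V A ps \<longleftrightarrow> ps \<noteq> [] \<and> distinct ps \<and> set ps \<subseteq> V
     \<and> (\<forall>i. Suc i < length ps \<longrightarrow> A (ps ! i) (ps ! Suc i))"

end

theory Submission
  imports Defs
begin

text \<open>
  All arguments are contradictions of one kind: cut the path \<open>x 0, \<dots>, x r\<close> into
  consecutive blocks, permute the middle blocks using the available arcs, and insert \<open>z\<close>
  between a block ending at an index \<open>> \<alpha>\<close> and a block starting at an index \<open>\<le> \<alpha>\<close>.
  This produces an \<open>(x 0, x r)\<close>-path on \<open>V(P) \<union> {z}\<close>, which is excluded.
  Alternating between two such reroutings shows that an arc from \<open>x i\<close> to \<open>x j\<close> with
  \<open>i < s\<close> and \<open>\<alpha> + 2 \<le> j < t\<close> forces \<open>x (i + 1)\<close> to dominate \<open>x (j - 1), x (j - 3), \<dots>\<close>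
  down to \<open>x (s + 1)\<close>; depending on the parity of \<open>j - s\<close>, the last arc of this chain
  admits one more rerouting. This fails only for \<open>i = s - 1\<close> and \<open>j = t - 1 = s + 4\<close>.
\<close>

lemma tournament_arc_flip:
  assumes "tournament V A" "u \<in> V" "v \<in> V" "u \<noteq> v" "\<not> A u v"
  shows "A v u"
  using assms unfolding tournament_def by metis

lemma is_path_singleton: "v \<in> V \<Longrightarrow> is_path V A [v]"
  unfolding is_path_def by simp

lemma is_path_append:
  assumes p: "is_path V A ps" and q: "is_path V A qs"
    and disj: "set ps \<inter> set qs = {}" and arc: "A (last ps) (hd qs)"
  shows "is_path V A (ps @ qs)"
  unfolding is_path_def
proof (intro conjI allI impI)
  have ne: "ps \<noteq> []" "qs \<noteq> []" using p q unfolding is_path_def by auto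
  show "ps @ qs \<noteq> []" using ne by simp
  show "distinct (ps @ qs)" "set (ps @ qs) \<subseteq> V"
    using p q disj unfolding is_path_def by auto
  fix i assume i: "Suc i < length (ps @ qs)"
  consider "Suc i < length ps" | "Suc i = length ps" | "length ps \<le> i"
    by linarith
  then show "A ((ps @ qs) ! i) ((ps @ qs) ! Suc i)"
  proof cases
    case 1
    then show ?thesis using p unfolding is_path_def by (simp add: nth_append)
  next
    case 2
    then have "i = length ps - 1" by simp
    then have "(ps @ qs) ! i = last ps" "(ps @ qs) ! Suc i = hd qs"
      using 2 ne by (auto simp add: nth_append last_conv_nth hd_conv_nth)
    then show ?thesis using arc by simp
  next
    case 3
    then have "Suc (i - length ps) < length qs" using i by simp
    then show ?thesis using q 3 unfolding is_path_def by (simp add: nth_append Suc_diff_le)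
  qed
qed

lemma is_path_map_upt_segment:
  assumes P: "is_path V A (map x [0..<Suc r])" and "a \<le> b" "b \<le> r"
  shows "is_path V A (map x [a..<Suc b])"
  unfolding is_path_def
proof (intro conjI allI impI)
  have "distinct (map x [0..<Suc r])" "set (map x [0..<Suc r]) \<subseteq> V"
    using P unfolding is_path_def by auto
  then have "inj_on x {0..r}" "x ` {0..r} \<subseteq> V"
    by (auto simp add: distinct_map atLeastLessThanSuc_atLeastAtMost simp del: upt_Suc)
  moreover have "{a..b} \<subseteq> {0..r}" using assms by auto
  ultimately show "distinct (map x [a..<Suc b])" "set (map x [a..<Suc b]) \<subseteq> V"
    by (auto simp add: distinct_map inj_on_subset atLeastLessThanSuc_atLeastAtMost
        simp del: upt_Suc)
  show "map x [a..<Suc b] \<noteq> []" using assms by simp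
  fix i assume "Suc i < length (map x [a..<Suc b])"
  then have i: "Suc i < Suc b - a" by (simp del: upt_Suc)
  then have "Suc (a + i) < length (map x [0..<Suc r])" using assms by (simp del: upt_Suc)
  then have "A (map x [0..<Suc r] ! (a + i)) (map x [0..<Suc r] ! Suc (a + i))"
    using P unfolding is_path_def by blast
  then show "A (map x [a..<Suc b] ! i) (map x [a..<Suc b] ! Suc i)"
    using i assms by (simp del: upt_Suc)
qed

locale uninsertable_vertex =
  fixes V :: "'a set" and A :: "'a \<Rightarrow> 'a \<Rightarrow> bool" and x :: "nat \<Rightarrow> 'a"
    and r \<alpha> :: nat and z :: 'a
  assumes T: "tournament V A"
    and P: "is_path V A (map x [0..<Suc r])"
    and zV: "z \<in> V" and zP: "z \<notin> x ` {0..r}"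
    and high_to_z: "\<forall>i\<in>{\<alpha>+1..r}. A (x i) z"
    and z_to_low: "\<forall>i\<in>{0..\<alpha>}. A z (x i)"
    and nopath: "\<not> (\<exists>ps. is_path V A ps \<and> length ps = r + 2
                    \<and> hd ps = x 0 \<and> last ps = x r
                    \<and> set ps = insert z (x ` {0..r}))"
begin

lemma inj_on_x: "inj_on x {0..r}"
  using P unfolding is_path_def
  by (simp add: distinct_map atLeastLessThanSuc_atLeastAtMost del: upt_Suc)

lemma x_dominates_z: "\<alpha> < k \<Longrightarrow> k \<le> r \<Longrightarrow> A (x k) z"
  using high_to_z by auto

lemma z_dominates_x: "k \<le> \<alpha> \<Longrightarrow> A z (x k)"
  using z_to_low by auto

lemma x_in_V: "k \<le> r \<Longrightarrow> x k \<in> V"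
  using P unfolding is_path_def by (auto simp del: upt_Suc)

lemma arc_flip:
  assumes "k \<le> r" "l \<le> r" "k \<noteq> l" "\<not> A (x k) (x l)"
  shows "A (x l) (x k)"
proof (rule tournament_arc_flip[OF T])
  show "x k \<noteq> x l" using inj_onD[OF inj_on_x] assms by fastforce
qed (use assms x_in_V in auto)

definition covering_path :: "'a \<Rightarrow> 'a \<Rightarrow> nat set \<Rightarrow> bool \<Rightarrow> bool" where
  "covering_path u v I b \<longleftrightarrow> I \<subseteq> {0..r} \<and> (\<exists>ps. is_path V A ps \<and> hd ps = u \<and> last ps = v
      \<and> set ps = x ` I \<union> (if b then {z} else {}))"

lemma covering_path_join:
  assumes h1: "covering_path u v I b" and h2: "covering_path u' v' I' b'"
    and d: "I \<inter> I' = {}" and nb: "\<not> (b \<and> b')" and a: "A v u'"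
  shows "covering_path u v' (I \<union> I') (b \<or> b')"
proof -
  obtain ps where p: "is_path V A ps" "hd ps = u" "last ps = v"
    "set ps = x ` I \<union> (if b then {z} else {})" and I: "I \<subseteq> {0..r}"
    using h1 unfolding covering_path_def by blast
  obtain qs where q: "is_path V A qs" "hd qs = u'" "last qs = v'"
    "set qs = x ` I' \<union> (if b' then {z} else {})" and I': "I' \<subseteq> {0..r}"
    using h2 unfolding covering_path_def by blast
  have "x ` I \<inter> x ` I' = {}"
    using inj_on_image_Int[OF inj_on_x I I'] d by simp
  moreover have "z \<notin> x ` I" "z \<notin> x ` I'" using zP I I' by auto
  ultimately have "set ps \<inter> set qs = {}" using p(4) q(4) nb by auto
  from is_path_append[OF p(1) q(1) this] have "is_path V A (ps @ qs)" using a p(3) q(2) by simp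
  moreover have "ps \<noteq> []" "qs \<noteq> []" using p(1) q(1) unfolding is_path_def by auto
  ultimately show ?thesis
    unfolding covering_path_def using p q I I' by (intro conjI exI[of _ "ps @ qs"]) auto
qed

lemma covering_path_segment:
  assumes "a \<le> b" "b \<le> r"
  shows "covering_path (x a) (x b) {a..b} False"
proof -
  have "hd (map x [a..<Suc b]) = x a" "last (map x [a..<Suc b]) = x b"
    using assms by (simp_all add: hd_map last_map del: upt_Suc)
  then show ?thesis
    unfolding covering_path_def using assms is_path_map_upt_segment[OF P assms]
    by (intro conjI exI[of _ "map x [a..<Suc b]"]) (auto simp del: upt_Suc)
qed

lemma covering_path_extend_segment:
  assumes "covering_path u v I b" "A v (x c)" "c \<le> d" "d \<le> r" "\<forall>k\<in>I. k < c \<or> d < k"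
  shows "covering_path u (x d) (I \<union> {c..d}) b"
proof -
  have "I \<inter> {c..d} = {}" using assms(5) by fastforce
  from covering_path_join[OF assms(1) covering_path_segment[OF assms(3,4)] this]
  show ?thesis using assms(2) by simp
qed

lemma covering_path_extend_z:
  assumes "covering_path u v I False" "A v z"
  shows "covering_path u z I True"
proof -
  have "covering_path z z {} True"
    unfolding covering_path_def using is_path_singleton[OF zV]
    by (intro conjI exI[of _ "[z]"]) auto
  from covering_path_join[OF assms(1) this] show ?thesis using assms by simp
qed

lemma no_covering_path:
  assumes "covering_path (x 0) (x r) I True" "I = {0..r}"
  shows False
proof -
  obtain ps where p: "is_path V A ps" "hd ps = x 0" "last ps = x r"
    "set ps = insert z (x ` {0..r})"
    using assms unfolding covering_path_def by auto
  have "length ps = card (insert z (x ` {0..r}))"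
    using p distinct_card unfolding is_path_def by fastforce
  also have "\<dots> = r + 2" using zP card_image[OF inj_on_x] by simp
  finally show False using nopath p by auto
qed

lemma swap_two_blocks:
  fixes p q w :: nat
  assumes "p + 2 \<le> q" "q < w" "w \<le> r" "p < \<alpha>" "\<alpha> + 2 \<le> w"
    "A (x p) (x q)" "A (x (q-1)) (x w)"
  shows False
proof -
  have "covering_path (x 0) (x p) {0..p} False"
    by (rule covering_path_segment) (use assms in auto)
  then have "covering_path (x 0) (x (w-1)) ({0..p} \<union> {q..w-1}) False"
    by (rule covering_path_extend_segment) (use assms in auto)
  then have "covering_path (x 0) z ({0..p} \<union> {q..w-1}) True"
    by (rule covering_path_extend_z) (rule x_dominates_z, use assms in auto)
  then have "covering_path (x 0) (x (q-1)) ({0..p} \<union> {q..w-1} \<union> {p+1..q-1}) True"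
    by (rule covering_path_extend_segment) (use assms z_dominates_x in auto)
  then have "covering_path (x 0) (x r)
      ({0..p} \<union> {q..w-1} \<union> {p+1..q-1} \<union> {w..r}) True"
    by (rule covering_path_extend_segment) (use assms in auto)
  then show False by (rule no_covering_path) (use assms in auto)
qed

text \<open>
  The blocks \<open>[u, w)\<close>, \<open>[q, u)\<close>, \<open>[p + 1, q)\<close> are traversed in this order, with \<open>z\<close>
  inserted after the first of them (\<open>early\<close>) or after the second (\<open>late\<close>).
\<close>
lemma reverse_three_blocks_early:
  fixes p q u w :: nat
  assumes "p + 2 \<le> q" "q < u" "u < w" "w \<le> r" "q \<le> \<alpha>" "\<alpha> + 2 \<le> w"
    "A (x p) (x u)" "A (x (u-1)) (x (p+1))" "A (x (q-1)) (x w)"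
  shows False
proof -
  have "covering_path (x 0) (x p) {0..p} False"
    by (rule covering_path_segment) (use assms in auto)
  then have "covering_path (x 0) (x (w-1)) ({0..p} \<union> {u..w-1}) False"
    by (rule covering_path_extend_segment) (use assms in auto)
  then have "covering_path (x 0) z ({0..p} \<union> {u..w-1}) True"
    by (rule covering_path_extend_z) (rule x_dominates_z, use assms in auto)
  then have "covering_path (x 0) (x (u-1)) ({0..p} \<union> {u..w-1} \<union> {q..u-1}) True"
    by (rule covering_path_extend_segment) (use assms z_dominates_x in auto)
  then have "covering_path (x 0) (x (q-1))
      ({0..p} \<union> {u..w-1} \<union> {q..u-1} \<union> {p+1..q-1}) True"
    by (rule covering_path_extend_segment) (use assms in auto)
  then have "covering_path (x 0) (x r)
      ({0..p} \<union> {u..w-1} \<union> {q..u-1} \<union> {p+1..q-1} \<union> {w..r}) True"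
    by (rule covering_path_extend_segment) (use assms in auto)
  then show False by (rule no_covering_path) (use assms in auto)
qed

lemma reverse_three_blocks_late:
  fixes p q u w :: nat
  assumes "p + 2 \<le> q" "q < u" "u < w" "w \<le> r" "p < \<alpha>" "\<alpha> + 2 \<le> u"
    "A (x p) (x u)" "A (x (w-1)) (x q)" "A (x (q-1)) (x w)"
  shows False
proof -
  have "covering_path (x 0) (x p) {0..p} False"
    by (rule covering_path_segment) (use assms in auto)
  then have "covering_path (x 0) (x (w-1)) ({0..p} \<union> {u..w-1}) False"
    by (rule covering_path_extend_segment) (use assms in auto)
  then have "covering_path (x 0) (x (u-1)) ({0..p} \<union> {u..w-1} \<union> {q..u-1}) False"
    by (rule covering_path_extend_segment) (use assms in auto)
  then have "covering_path (x 0) z ({0..p} \<union> {u..w-1} \<union> {q..u-1}) True"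
    by (rule covering_path_extend_z) (rule x_dominates_z, use assms in auto)
  then have "covering_path (x 0) (x (q-1))
      ({0..p} \<union> {u..w-1} \<union> {q..u-1} \<union> {p+1..q-1}) True"
    by (rule covering_path_extend_segment) (use assms z_dominates_x in auto)
  then have "covering_path (x 0) (x r)
      ({0..p} \<union> {u..w-1} \<union> {q..u-1} \<union> {p+1..q-1} \<union> {w..r}) True"
    by (rule covering_path_extend_segment) (use assms in auto)
  then show False by (rule no_covering_path) (use assms in auto)
qed

lemma reverse_four_blocks:
  fixes p q u v w :: nat
  assumes "p + 2 \<le> q" "q < u" "u < v" "v < w" "w \<le> r" "q \<le> \<alpha>" "\<alpha> + 2 \<le> v"
    "A (x p) (x v)" "A (x (w-1)) (x u)" "A (x (u-1)) (x (p+1))" "A (x (q-1)) (x w)"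
  shows False
proof -
  have "covering_path (x 0) (x p) {0..p} False"
    by (rule covering_path_segment) (use assms in auto)
  then have "covering_path (x 0) (x (w-1)) ({0..p} \<union> {v..w-1}) False"
    by (rule covering_path_extend_segment) (use assms in auto)
  then have "covering_path (x 0) (x (v-1)) ({0..p} \<union> {v..w-1} \<union> {u..v-1}) False"
    by (rule covering_path_extend_segment) (use assms in auto)
  then have "covering_path (x 0) z ({0..p} \<union> {v..w-1} \<union> {u..v-1}) True"
    by (rule covering_path_extend_z) (rule x_dominates_z, use assms in auto)
  then have "covering_path (x 0) (x (u-1))
      ({0..p} \<union> {v..w-1} \<union> {u..v-1} \<union> {q..u-1}) True"
    by (rule covering_path_extend_segment) (use assms z_dominates_x in auto)
  then have "covering_path (x 0) (x (q-1))
      ({0..p} \<union> {v..w-1} \<union> {u..v-1} \<union> {q..u-1} \<union> {p+1..q-1}) True"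
    by (rule covering_path_extend_segment) (use assms in auto)
  then have "covering_path (x 0) (x r)
      ({0..p} \<union> {v..w-1} \<union> {u..v-1} \<union> {q..u-1} \<union> {p+1..q-1} \<union> {w..r}) True"
    by (rule covering_path_extend_segment) (use assms in auto)
  then show False by (rule no_covering_path) (use assms in auto)
qed

end

locale crossing_arc = uninsertable_vertex +
  fixes s t :: nat
  assumes arc: "A (x s) (x t)" and s_less: "s < \<alpha>" and t_bounds: "\<alpha> + 3 \<le> t" "t \<le> r"
begin

lemma succ_dominates_every_other_below:
  assumes i: "i < s" and j: "\<alpha> + 2 \<le> j" "j < t" and ij: "A (x i) (x j)"
  shows "s + 1 \<le> j - 1 - 2 * m \<Longrightarrow> A (x (i+1)) (x (j - 1 - 2 * m))"
proof (induction m)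
  case 0
  have "\<not> A (x (j-1)) (x (i+1))"
    by (rule notI, rule reverse_three_blocks_early[of i "s+1" j t])
      (use i j ij arc s_less t_bounds in auto)
  then show ?case by (intro arc_flip) (use i j s_less t_bounds in auto)
next
  case (Suc m)
  define k where "k = j - 1 - 2 * m"
  have k: "s + 3 \<le> k" "k \<le> j - 1" using Suc.prems j unfolding k_def by auto
  have ik: "A (x (i+1)) (x k)" using Suc.IH k unfolding k_def by auto
  have "\<not> A (x (k-1)) (x (t-1))"
    by (rule notI, rule swap_two_blocks[of "i+1" k "t-1"])
      (use i j k ik s_less t_bounds in auto)
  then have tk: "A (x (t-1)) (x (k-1))" by (intro arc_flip) (use j k t_bounds in auto)
  have "\<not> A (x (k-2)) (x (i+1))"
    by (rule notI, rule reverse_four_blocks[of i "s+1" "k-1" j t])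
      (use i j ij k tk arc s_less t_bounds in \<open>auto simp add: numeral_2_eq_2\<close>)
  then have "A (x (i+1)) (x (k-2))" by (intro arc_flip) (use i j k t_bounds in auto)
  moreover have "k - 2 = j - 1 - 2 * Suc m" unfolding k_def by simp
  ultimately show ?case by simp
qed

lemma every_other_above_dominates_pred_t:
  assumes s: "1 \<le> s" and j: "\<alpha> + 2 \<le> j" "j < t" and ij: "A (x (s-1)) (x j)"
  shows "s + 1 + 2 * m \<le> j - 1 \<Longrightarrow> A (x (s + 1 + 2 * m)) (x (t-1))"
proof (induction m)
  case 0
  have "\<not> A (x (t-1)) (x (s+1))"
    by (rule notI, rule reverse_three_blocks_late[of "s-1" "s+1" j t])
      (use s j ij arc s_less t_bounds in auto)
  then show ?case by (intro arc_flip) (use j s_less t_bounds in auto)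
next
  case (Suc m)
  define k where "k = s + 1 + 2 * m"
  have k: "s + 1 \<le> k" "k + 2 \<le> j - 1" using Suc.prems j unfolding k_def by auto
  have kt: "A (x k) (x (t-1))" using Suc.IH k unfolding k_def by auto
  have "\<not> A (x s) (x (k+1))"
    by (rule notI, rule swap_two_blocks[of s "k+1" "t-1"]) (use j k kt s_less t_bounds in auto)
  then have ks: "A (x (k+1)) (x s)" by (intro arc_flip) (use j k t_bounds in auto)
  have "\<not> A (x (t-1)) (x (k+2))"
    by (rule notI, rule reverse_four_blocks[of "s-1" "s+1" "k+2" j t])
      (use s j ij k ks arc s_less t_bounds in auto)
  then have "A (x (k+2)) (x (t-1))" by (intro arc_flip) (use j k t_bounds in auto)
  moreover have "k + 2 = s + 1 + 2 * Suc m" unfolding k_def by simp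
  ultimately show ?case by simp
qed

lemma no_arc_from_far_below:
  assumes i: "i + 2 \<le> s" and j: "\<alpha> + 2 \<le> j" "j < t"
  shows "\<not> A (x i) (x j)"
proof
  assume ij: "A (x i) (x j)"
  have i_less: "i < s" using i by simp
  note chain = succ_dominates_every_other_below[OF i_less j ij]
  have "(\<exists>m. j = s + 2 * m + 3) \<or> (\<exists>m. j = s + 2 * m + 4)"
    using j s_less by presburger
  then show False
  proof (elim disjE exE)
    fix m assume "j = s + 2 * m + 3"
    then have i1: "A (x (i+1)) (x (s+2))" using chain[of m] by auto
    have "\<not> A (x (s+1)) (x (t-1))"
      by (rule notI, rule swap_two_blocks[of "i+1" "s+2" "t-1"])
        (use i j i1 s_less t_bounds in auto)
    then have "A (x (t-1)) (x (s+1))" by (intro arc_flip) (use j s_less t_bounds in auto)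
    then show False
      using reverse_three_blocks_late[of i "s+1" j t] i j ij arc s_less t_bounds by auto
  next
    fix m assume "j = s + 2 * m + 4"
    then have i1: "A (x (i+1)) (x (s+1))" using chain[of "m+1"] by auto
    show False by (rule swap_two_blocks[of "i+1" "s+1" t]) (use i j i1 arc s_less t_bounds in auto)
  qed
qed

lemma no_arc_from_pred_to_pred_t:
  assumes s: "1 \<le> s" and ts: "s + 7 \<le> t" "odd (t - s)"
  shows "\<not> A (x (s-1)) (x (t-1))"
proof
  assume st: "A (x (s-1)) (x (t-1))"
  have j: "\<alpha> + 2 \<le> t - 1" "t - 1 < t" using t_bounds by auto
  have chain: "s + 1 \<le> t - 2 - 2 * m \<Longrightarrow> A (x s) (x (t - 2 - 2 * m))" for m
    using succ_dominates_every_other_below[OF _ j st, of m] s by (simp add: numeral_2_eq_2)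
  have "\<exists>m. t = s + 2 * m + 5" using ts by presburger
  then obtain m where m: "t = s + 2 * m + 5" by blast
  have s_t2: "A (x s) (x (t-2))" using chain[of 0] ts by simp
  have s_s3: "A (x s) (x (s+3))" using chain[of m] m by (simp add: add.commute)
  have s1_t1: "A (x (s+1)) (x (t-1))"
    using every_other_above_dominates_pred_t[OF s j st, of 0] ts by simp
  consider "\<alpha> + 4 \<le> t" | "t = \<alpha> + 3" using t_bounds by linarith
  then show False
  proof cases
    case 1
    have "\<not> A (x (t-2)) (x (s+2))"
      by (rule notI, rule reverse_three_blocks_late[of s "s+2" "t-2" "t-1"])
        (use 1 ts(1) s_t2 s1_t1 s_less t_bounds in \<open>simp_all add: numeral_2_eq_2\<close>)
    then have "A (x (s+2)) (x (t-2))" by (intro arc_flip) (use ts t_bounds in auto)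
    then show False
      by (intro swap_two_blocks[of s "s+3" "t-2"]) (use 1 ts(1) s_s3 s_less t_bounds in simp_all)
  next
    case 2
    have "\<not> A (x (t-3)) (x (s+1))"
      by (rule notI, rule reverse_three_blocks_early[of s "s+2" "t-2" "t-1"])
        (use 2 ts(1) s_t2 s1_t1 t_bounds in \<open>simp_all add: numeral_3_eq_3\<close>)
    then have "A (x (s+1)) (x (t-3))" by (intro arc_flip) (use ts t_bounds in auto)
    moreover have "s + 1 + 2 * m = t - 3 - 1" using m by simp
    then have "A (x (t-3-1)) (x (t-1))"
      using every_other_above_dominates_pred_t[OF s j st, of m] m by simp
    ultimately show False
      by (intro swap_two_blocks[of "s+1" "t-3" "t-1"]) (use 2 ts(1) t_bounds in simp_all)
  qed
qed

lemma no_arc_from_pred: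
  assumes s: "1 \<le> s" and ts: "t - s \<noteq> 5" and j: "\<alpha> + 2 \<le> j" "j < t"
  shows "\<not> A (x (s-1)) (x j)"
proof
  assume sj: "A (x (s-1)) (x j)"
  have chain: "s + 1 \<le> j - 1 - 2 * m \<Longrightarrow> A (x s) (x (j - 1 - 2 * m))" for m
    using succ_dominates_every_other_below[OF _ j sj, of m] s by simp
  have s1_t1: "A (x (s+1)) (x (t-1))"
    using every_other_above_dominates_pred_t[OF s j sj, of 0] j s_less by simp
  have "(\<exists>m. j = s + 2 * m + 3) \<or> (\<exists>m. j = s + 2 * m + 4)"
    using j s_less by presburger
  then show False
  proof (elim disjE exE)
    fix m assume "j = s + 2 * m + 3"
    then have "A (x s) (x (s+2))" using chain[of m] by auto
    then show False
      by (intro swap_two_blocks[of s "s+2" "t-1"]) (use j s1_t1 s_less t_bounds in simp_all)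
  next
    fix m assume jm: "j = s + 2 * m + 4"
    then have s_s3: "A (x s) (x (s+3))" using chain[of m] by (simp add: add.commute)
    show False
    proof (cases "j + 2 \<le> t")
      case True
      have sj4: "s + 4 \<le> j" using jm by simp
      have "\<not> A (x (t-2)) (x (s+2))"
        by (rule notI, rule reverse_three_blocks_late[of "s-1" "s+2" j "t-1"])
          (use True s j sj4 sj s1_t1 s_less t_bounds in \<open>simp_all add: numeral_2_eq_2\<close>)
      then have "A (x (s+2)) (x (t-2))" by (intro arc_flip) (use True sj4 t_bounds in simp_all)
      then show False
        by (intro swap_two_blocks[of s "s+3" "t-2"])
          (use True j sj4 s_s3 s_less t_bounds in simp_all)
    next
      case False
      then have "j = t - 1" using j by simp
      moreover have "s + 7 \<le> t" "odd (t - s)"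
        using \<open>j = t - 1\<close> jm ts t_bounds by presburger+
      ultimately show False using no_arc_from_pred_to_pred_t[OF s] sj by simp
    qed
  qed
qed

end

theorem lemma3p3:
  fixes V :: "'a set" and A :: "'a \<Rightarrow> 'a \<Rightarrow> bool" and x :: "nat \<Rightarrow> 'a"
    and r \<alpha> s t :: nat and z :: 'a
  assumes T: "tournament V A"
    and P: "is_path V A (map x [0..<Suc r])"
    and zV: "z \<in> V" and zP: "z \<notin> x ` {0..r}"
    and dom1: "\<forall>i\<in>{\<alpha>+1..r}. A (x i) z"
    and dom2: "\<forall>i\<in>{0..\<alpha>}. A z (x i)"
    and alpha: "2 \<le> \<alpha>" "\<alpha> + 3 \<le> r"
    and nopath: "\<not> (\<exists>ps. is_path V A ps \<and> length ps = r + 2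
                    \<and> hd ps = x 0 \<and> last ps = x r
                    \<and> set ps = insert z (x ` {0..r}))"
    and arc: "A (x s) (x t)"
    and s: "1 \<le> s" "s \<le> \<alpha> - 1"
    and t: "\<alpha> + 3 \<le> t" "t \<le> r"
  shows "(s \<ge> 3 \<longrightarrow> (\<forall>i\<in>{0..s-2}. \<forall>j\<in>{\<alpha>+2..t-1}. \<not> A (x i) (x j)))
       \<and> (t - s \<noteq> 5 \<longrightarrow> (\<forall>j\<in>{\<alpha>+2..t-1}. \<not> A (x (s-1)) (x j)))"
proof -
  interpret crossing_arc V A x r \<alpha> z s t
    by unfold_locales (use T P zV zP dom1 dom2 nopath arc s t alpha in auto)
  show ?thesis
  proof (intro conjI impI ballI)
    fix i j assume "3 \<le> s" "i \<in> {0..s-2}" "j \<in> {\<alpha>+2..t-1}"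
    then show "\<not> A (x i) (x j)" by (intro no_arc_from_far_below) auto
  next
    fix j assume "t - s \<noteq> 5" "j \<in> {\<alpha>+2..t-1}"
    then show "\<not> A (x (s-1)) (x j)" by (intro no_arc_from_pred) (use s in auto)
  qed
qed

end
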